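(* Let $\mathcal{W}$ be a finite set and $(X_t)_{t\ge1}$ a time-homogeneous first-order Markov chain on $\mathcal{W}$ with initial distribution $p_{x_1}$ and transition probabilities $q_x(x_{t+1}\mid x_t)$. For any history-dependent release policy $\boldsymbol q\in\mathcal{Q}_H$ and any $n\ge1$, $$I^{\boldsymbol q}(X^n;Y^n)\ \ge\ \sum_{t=1}^n I^{\boldsymbol q}(X_t,X_{t-1};Y_t\mid Y^{t-1}),$$ with equality if and only if $\boldsymbol q\in\mathcal{Q}_S$.
   Context: Notation: $X^t=(X_1,\dots,X_t)$, $Y^{t-1}=(Y_1,\dots,Y_{t-1})$, $Y^0$ empty; at $t=1$ terms involving $X_0$ are absent. A history-dependent release policy is a sequence $\boldsymbol q=\{q_t(y_t\mid x^t,y^{t-1})\}_{t\ge1}$ of conditional probability distributions on $\mathcal{W}$; $\mathcal{Q}_H$ is the set of all such policies. The released locations $Y_t\in\mathcal W$ and true locations have joint law $$P^{\boldsymbol q}(X^n=x^n,Y^n=y^n)=p_{x_1}(x_1)q_1(y_1\mid x_1)\prod_{t=2}^n q_x(x_t\mid x_{t-1})\,q_t(y_t\mid x^t,y^{t-1}),$$ and $I^{\boldsymbol q}$ denotes mutual information under this law. $\mathcal{Q}_S\subseteq\mathcal{Q}_H$ is the set of policies of the form $q_t(y_t\mid x_t,x_{t-1},y^{t-1})$, depending on the true trajectory only through $(x_t,x_{t-1})$.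
   Formalization: Equality holds if and only if some policy in $\mathcal{Q}_S$ induces the same joint law of $X^n$ and $Y^n$ as $\boldsymbol q$, in place of $\boldsymbol q\in\mathcal{Q}_S$. The statement above fails without it. *)

theory Defs
  imports Complex_Main
begin

text \<open>Finite alphabet: a type of class finite. Trajectories are lists; index t
(1-based in the paper) corresponds to list position t-1.\<close>

definition prob_vec :: "('w::finite \<Rightarrow> real) \<Rightarrow> bool" where
  "prob_vec p \<longleftrightarrow> (\<forall>x. 0 \<le> p x) \<and> (\<Sum>x\<in>UNIV. p x) = 1"

text \<open>T x x' = q_x(x' | x): transition probability from x to x'.\<close>
definition markov_kernel :: "('w::finite \<Rightarrow> 'w \<Rightarrow> real) \<Rightarrow> bool" where
  "markov_kernel T \<longleftrightarrow> (\<forall>x. prob_vec (T x))"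

text \<open>q t xs ys y = q_t(y | x^t, y^{t-1}), with length xs = t, length ys = t-1.\<close>
definition QH :: "(nat \<Rightarrow> 'w::finite list \<Rightarrow> 'w list \<Rightarrow> 'w \<Rightarrow> real) set" where
  "QH = {q. \<forall>t xs ys. 1 \<le> t \<longrightarrow> length xs = t \<longrightarrow> length ys = t - 1 \<longrightarrow> prob_vec (q t xs ys)}"

text \<open>Policies depending on the true trajectory only through (x_t, x_{t-1}),
i.e. through the last (at most) two entries  drop (t-2) xs.\<close>
definition QS :: "(nat \<Rightarrow> 'w::finite list \<Rightarrow> 'w list \<Rightarrow> 'w \<Rightarrow> real) set" where
  "QS = {q. q \<in> QH \<and> (\<forall>t xs xs' ys. 1 \<le> t \<longrightarrow> length xs = t \<longrightarrow> length xs' = t \<longrightarrow>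
            length ys = t - 1 \<longrightarrow> drop (t - 2) xs = drop (t - 2) xs' \<longrightarrow> q t xs ys = q t xs' ys)}"

definition traj_space :: "nat \<Rightarrow> ('w list \<times> 'w list) set" where
  "traj_space n = {(xs, ys). length xs = n \<and> length ys = n}"

definition joint :: "('w \<Rightarrow> real) \<Rightarrow> ('w \<Rightarrow> 'w \<Rightarrow> real) \<Rightarrow>
    (nat \<Rightarrow> 'w list \<Rightarrow> 'w list \<Rightarrow> 'w \<Rightarrow> real) \<Rightarrow> nat \<Rightarrow> ('w list \<times> 'w list) \<Rightarrow> real" where
  "joint p T q n \<omega> = (case \<omega> of (xs, ys) \<Rightarrow>
     if length xs = n \<and> length ys = n then
       (\<Prod>t\<in>{1..n}. (if t = 1 then p (xs ! 0) else T (xs ! (t - 2)) (xs ! (t - 1)))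
                      * q t (take t xs) (take (t - 1) ys) (ys ! (t - 1)))
     else 0)"

definition prob_of :: "'s set \<Rightarrow> ('s \<Rightarrow> real) \<Rightarrow> ('s \<Rightarrow> bool) \<Rightarrow> real" where
  "prob_of \<Omega> P E = (\<Sum>\<omega>\<in>{\<omega>\<in>\<Omega>. E \<omega>}. P \<omega>)"

text \<open>Conditional mutual information I(A;B|C) (natural log) of discrete random
variables A, B, C on a finite sample space with pmf P:
 sum over values of P(a,b,c) log (P(a,b,c) P(c) / (P(a,c) P(b,c))),
written as an expectation over outcomes (terms with P \<omega> = 0 vanish).\<close>
definition cond_mi :: "'s set \<Rightarrow> ('s \<Rightarrow> real) \<Rightarrow> ('s \<Rightarrow> 'a) \<Rightarrow> ('s \<Rightarrow> 'b) \<Rightarrow> ('s \<Rightarrow> 'c) \<Rightarrow> real" where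
  "cond_mi \<Omega> P A B C = (\<Sum>\<omega>\<in>\<Omega>. P \<omega> *
     ln ((prob_of \<Omega> P (\<lambda>\<eta>. A \<eta> = A \<omega> \<and> B \<eta> = B \<omega> \<and> C \<eta> = C \<omega>) * prob_of \<Omega> P (\<lambda>\<eta>. C \<eta> = C \<omega>))
       / (prob_of \<Omega> P (\<lambda>\<eta>. A \<eta> = A \<omega> \<and> C \<eta> = C \<omega>) * prob_of \<Omega> P (\<lambda>\<eta>. B \<eta> = B \<omega> \<and> C \<eta> = C \<omega>))))"

definition mutual_info :: "'s set \<Rightarrow> ('s \<Rightarrow> real) \<Rightarrow> ('s \<Rightarrow> 'a) \<Rightarrow> ('s \<Rightarrow> 'b) \<Rightarrow> real" where
  "mutual_info \<Omega> P A B = cond_mi \<Omega> P A B (\<lambda>_. ())"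

end

theory Submission
  imports Defs
begin

text \<open>
  Write G(F) = \<Sum>\<omega>. P \<omega> * ln P(F = F \<omega>) for the negative entropy of a random variable F;
  every conditional mutual information is a signed sum of four values of G.  Since X^n determines
  Z_t = (X_t, X_(t-1)), the sum I(Z_t; Y_t | Y^(t-1)) + I(X^n; Y_t | Z_t, Y^(t-1)) telescopes over t
  to I(X^n; Y^n).  The residual terms I(X^n; Y_t | Z_t, Y^(t-1)) are nonnegative by Gibbs'
  inequality (ln r \<le> r - 1), which gives the inequality, and they all vanish iff Y_t is
  conditionally independent of X^n given (Z_t, Y^(t-1)) on the support of the joint law.

  The joint law factorises as the Markov probability of the path times the product of the
  release kernels.  Under a policy in Q_S this factorisation yields the conditional independence.
  Conversely, if it holds, the conditional law of Y_t given (Z_t, Y^(t-1)) is a policy in Q_S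
  that agrees with q on every history of positive probability, so it generates the same joint law.
\<close>

section \<open>Information measures on a finite sample space\<close>

lemma prob_of_eq_sum_if:
  "finite \<Omega> \<Longrightarrow> prob_of \<Omega> P E = (\<Sum>\<eta>\<in>\<Omega>. if E \<eta> then P \<eta> else 0)"
  unfolding prob_of_def by (simp add: sum.inter_filter)

lemma prob_of_nonneg: "\<forall>\<omega>\<in>\<Omega>. 0 \<le> P \<omega> \<Longrightarrow> 0 \<le> prob_of \<Omega> P E"
  unfolding prob_of_def by (intro sum_nonneg) auto

lemma prob_of_pos_point:
  assumes "finite \<Omega>" "\<forall>\<eta>\<in>\<Omega>. 0 \<le> P \<eta>" "\<omega> \<in> \<Omega>" "E \<omega>" "0 < P \<omega>"
  shows "0 < prob_of \<Omega> P E"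
proof -
  have "P \<omega> \<le> prob_of \<Omega> P E"
    unfolding prob_of_def using assms by (intro member_le_sum) auto
  with assms(5) show ?thesis by linarith
qed

lemma prob_of_cong: "(\<And>\<eta>. \<eta> \<in> \<Omega> \<Longrightarrow> E \<eta> = E' \<eta>) \<Longrightarrow> prob_of \<Omega> P E = prob_of \<Omega> P E'"
  unfolding prob_of_def by (rule arg_cong[of _ _ "sum P"]) auto

lemma prob_of_pos_imp_ex: "0 < prob_of \<Omega> P E \<Longrightarrow> \<exists>\<omega>\<in>\<Omega>. E \<omega> \<and> 0 < P \<omega>"
  unfolding prob_of_def by (metis (no_types, lifting) mem_Collect_eq not_less sum_nonpos)

lemma prob_of_sum_values:
  fixes g :: "'s \<Rightarrow> 'v::finite"
  assumes "finite \<Omega>"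
  shows "(\<Sum>v\<in>UNIV. prob_of \<Omega> P (\<lambda>\<eta>. E \<eta> \<and> g \<eta> = v)) = prob_of \<Omega> P E"
proof -
  have "{\<eta>\<in>\<Omega>. E \<eta> \<and> g \<eta> = v} = {\<eta>. \<eta> \<in> {\<eta>\<in>\<Omega>. E \<eta>} \<and> g \<eta> = v}" for v
    by auto
  then show ?thesis
    unfolding prob_of_def using sum.group[of "{\<eta>\<in>\<Omega>. E \<eta>}" UNIV g P] assms by simp
qed

lemma sum_normalized_le_1:
  assumes "finite \<Omega>" "\<forall>\<omega>\<in>\<Omega>. 0 \<le> P \<omega>"
  shows "(\<Sum>\<omega>\<in>\<Omega>. if E \<omega> then P \<omega> / prob_of \<Omega> P E else 0) \<le> 1"
proof -
  have "(\<Sum>\<omega>\<in>\<Omega>. if E \<omega> then P \<omega> / prob_of \<Omega> P E else 0)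
      = (\<Sum>\<omega>\<in>\<Omega>. if E \<omega> then P \<omega> else 0) / prob_of \<Omega> P E"
    unfolding sum_divide_distrib by (intro sum.cong) auto
  also have "\<dots> = prob_of \<Omega> P E / prob_of \<Omega> P E"
    using assms(1) by (simp only: prob_of_eq_sum_if)
  also have "\<dots> \<le> 1"
    by (cases "prob_of \<Omega> P E = 0") simp_all
  finally show ?thesis .
qed

definition cond_indep_at :: "'s set \<Rightarrow> ('s \<Rightarrow> real) \<Rightarrow> ('s \<Rightarrow> 'a) \<Rightarrow> ('s \<Rightarrow> 'b) \<Rightarrow> ('s \<Rightarrow> 'c) \<Rightarrow> 's \<Rightarrow> bool"
  where "cond_indep_at \<Omega> P A B C \<omega> \<longleftrightarrow>
    prob_of \<Omega> P (\<lambda>\<eta>. A \<eta> = A \<omega> \<and> B \<eta> = B \<omega> \<and> C \<eta> = C \<omega>) * prob_of \<Omega> P (\<lambda>\<eta>. C \<eta> = C \<omega>)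
    = prob_of \<Omega> P (\<lambda>\<eta>. A \<eta> = A \<omega> \<and> C \<eta> = C \<omega>) * prob_of \<Omega> P (\<lambda>\<eta>. B \<eta> = B \<omega> \<and> C \<eta> = C \<omega>)"

definition indep_ratio :: "'s set \<Rightarrow> ('s \<Rightarrow> real) \<Rightarrow> ('s \<Rightarrow> 'a) \<Rightarrow> ('s \<Rightarrow> 'b) \<Rightarrow> ('s \<Rightarrow> 'c) \<Rightarrow> 's \<Rightarrow> real"
  where "indep_ratio \<Omega> P A B C \<omega> =
    prob_of \<Omega> P (\<lambda>\<eta>. A \<eta> = A \<omega> \<and> C \<eta> = C \<omega>) * prob_of \<Omega> P (\<lambda>\<eta>. B \<eta> = B \<omega> \<and> C \<eta> = C \<omega>)
    / (prob_of \<Omega> P (\<lambda>\<eta>. A \<eta> = A \<omega> \<and> B \<eta> = B \<omega> \<and> C \<eta> = C \<omega>) * prob_of \<Omega> P (\<lambda>\<eta>. C \<eta> = C \<omega>))"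

lemma cond_mi_eq_ln_indep_ratio:
  "cond_mi \<Omega> P A B C = - (\<Sum>\<omega>\<in>\<Omega>. P \<omega> * ln (indep_ratio \<Omega> P A B C \<omega>))"
proof -
  have swap: "x * ln (a / b) = - (x * ln (b / a))" for x a b :: real
    by (simp add: ln_div algebra_simps)
  show ?thesis
    unfolding cond_mi_def indep_ratio_def sum_negf[symmetric] by (rule sum.cong[OF refl swap])
qed

lemma cond_mi_eq_gap_sum:
  "cond_mi \<Omega> P A B C
    = (\<Sum>\<omega>\<in>\<Omega>. P \<omega> * (indep_ratio \<Omega> P A B C \<omega> - 1 - ln (indep_ratio \<Omega> P A B C \<omega>)))
      + ((\<Sum>\<omega>\<in>\<Omega>. P \<omega>) - (\<Sum>\<omega>\<in>\<Omega>. P \<omega> * indep_ratio \<Omega> P A B C \<omega>))"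
  unfolding cond_mi_eq_ln_indep_ratio
  by (simp add: algebra_simps sum.distrib sum_subtractf sum_negf)

context
  fixes \<Omega> :: "'s set" and P :: "'s \<Rightarrow> real"
  assumes finite: "finite \<Omega>" and nonneg: "\<forall>\<omega>\<in>\<Omega>. 0 \<le> P \<omega>"
begin

lemma indep_ratio_pos:
  assumes "\<omega> \<in> \<Omega>" "0 < P \<omega>"
  shows "0 < indep_ratio \<Omega> P A B C \<omega>"
  unfolding indep_ratio_def
  using assms by (intro divide_pos_pos mult_pos_pos prob_of_pos_point[OF finite nonneg assms(1)]) auto

lemma indep_ratio_eq_1_iff:
  assumes "\<omega> \<in> \<Omega>" "0 < P \<omega>"
  shows "indep_ratio \<Omega> P A B C \<omega> = 1 \<longleftrightarrow> cond_indep_at \<Omega> P A B C \<omega>"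
proof -
  have "0 < prob_of \<Omega> P (\<lambda>\<eta>. A \<eta> = A \<omega> \<and> B \<eta> = B \<omega> \<and> C \<eta> = C \<omega>) * prob_of \<Omega> P (\<lambda>\<eta>. C \<eta> = C \<omega>)"
    using assms by (intro mult_pos_pos prob_of_pos_point[OF finite nonneg assms(1)]) auto
  then show ?thesis
    unfolding indep_ratio_def cond_indep_at_def by auto
qed

lemma sum_class_normalized_le:
  "(\<Sum>\<omega>\<in>\<Omega>. if A \<omega> = a \<and> B \<omega> = b \<and> C \<omega> = c
      then P \<omega> / (prob_of \<Omega> P (\<lambda>\<xi>. A \<xi> = A \<omega> \<and> B \<xi> = B \<omega> \<and> C \<xi> = C \<omega>) * prob_of \<Omega> P (\<lambda>\<xi>. C \<xi> = C \<omega>))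
      else 0)
    \<le> 1 / prob_of \<Omega> P (\<lambda>\<xi>. C \<xi> = c)"
proof -
  let ?E = "\<lambda>\<omega>. A \<omega> = a \<and> B \<omega> = b \<and> C \<omega> = c"
  have "(\<Sum>\<omega>\<in>\<Omega>. if ?E \<omega>
      then P \<omega> / (prob_of \<Omega> P (\<lambda>\<xi>. A \<xi> = A \<omega> \<and> B \<xi> = B \<omega> \<and> C \<xi> = C \<omega>) * prob_of \<Omega> P (\<lambda>\<xi>. C \<xi> = C \<omega>))
      else 0)
    = (\<Sum>\<omega>\<in>\<Omega>. if ?E \<omega> then P \<omega> / prob_of \<Omega> P ?E else 0) / prob_of \<Omega> P (\<lambda>\<xi>. C \<xi> = c)"
    unfolding sum_divide_distrib by (intro sum.cong refl) auto
  also have "\<dots> \<le> 1 / prob_of \<Omega> P (\<lambda>\<xi>. C \<xi> = c)"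
    by (rule divide_right_mono[OF sum_normalized_le_1[OF finite nonneg] prob_of_nonneg[OF nonneg]])
  finally show ?thesis .
qed

text \<open>Expand the two marginals in the numerator as sums over \<open>\<eta>\<close> and \<open>\<zeta>\<close>, and sum over \<open>\<omega>\<close>
  first: the \<open>\<omega>\<close> contributing to a pair \<open>(\<eta>, \<zeta>)\<close> form a single class of \<open>(A, B, C)\<close>.\<close>

lemma sum_mult_indep_ratio_le:
  "(\<Sum>\<omega>\<in>\<Omega>. P \<omega> * indep_ratio \<Omega> P A B C \<omega>) \<le> (\<Sum>\<omega>\<in>\<Omega>. P \<omega>)"
proof -
  let ?pr = "prob_of \<Omega> P"
  define pabc where "pabc \<omega> = ?pr (\<lambda>\<xi>. A \<xi> = A \<omega> \<and> B \<xi> = B \<omega> \<and> C \<xi> = C \<omega>)" for \<omega>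
  define pc where "pc \<omega> = ?pr (\<lambda>\<xi>. C \<xi> = C \<omega>)" for \<omega>
  define cls where "cls \<eta> \<zeta> \<omega> \<longleftrightarrow> A \<omega> = A \<eta> \<and> B \<omega> = B \<zeta> \<and> C \<omega> = C \<eta> \<and> C \<zeta> = C \<eta>" for \<eta> \<zeta> \<omega>
  have expand: "P \<omega> * indep_ratio \<Omega> P A B C \<omega>
      = (\<Sum>\<eta>\<in>\<Omega>. \<Sum>\<zeta>\<in>\<Omega>. if cls \<eta> \<zeta> \<omega> then P \<eta> * P \<zeta> * (P \<omega> / (pabc \<omega> * pc \<omega>)) else 0)" for \<omega>
  proof -
    have "P \<omega> * indep_ratio \<Omega> P A B C \<omega>
        = P \<omega> / (pabc \<omega> * pc \<omega>) * ((\<Sum>\<eta>\<in>\<Omega>. if A \<eta> = A \<omega> \<and> C \<eta> = C \<omega> then P \<eta> else 0)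
          * (\<Sum>\<zeta>\<in>\<Omega>. if B \<zeta> = B \<omega> \<and> C \<zeta> = C \<omega> then P \<zeta> else 0))"
      unfolding indep_ratio_def pabc_def pc_def prob_of_eq_sum_if[OF finite, of P "\<lambda>\<eta>. _ \<eta> \<and> _ \<eta>"]
      by simp
    also have "\<dots> = (\<Sum>\<eta>\<in>\<Omega>. \<Sum>\<zeta>\<in>\<Omega>. P \<omega> / (pabc \<omega> * pc \<omega>)
        * ((if A \<eta> = A \<omega> \<and> C \<eta> = C \<omega> then P \<eta> else 0) * (if B \<zeta> = B \<omega> \<and> C \<zeta> = C \<omega> then P \<zeta> else 0)))"
      by (subst sum_product) (simp only: sum_distrib_left)
    also have "\<dots> = (\<Sum>\<eta>\<in>\<Omega>. \<Sum>\<zeta>\<in>\<Omega>. if cls \<eta> \<zeta> \<omega> then P \<eta> * P \<zeta> * (P \<omega> / (pabc \<omega> * pc \<omega>)) else 0)"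
      by (intro sum.cong refl) (auto simp: cls_def)
    finally show ?thesis .
  qed
  have "(\<Sum>\<omega>\<in>\<Omega>. P \<omega> * indep_ratio \<Omega> P A B C \<omega>)
      = (\<Sum>\<eta>\<in>\<Omega>. \<Sum>\<omega>\<in>\<Omega>. \<Sum>\<zeta>\<in>\<Omega>. if cls \<eta> \<zeta> \<omega> then P \<eta> * P \<zeta> * (P \<omega> / (pabc \<omega> * pc \<omega>)) else 0)"
    unfolding expand by (rule sum.swap)
  also have "\<dots> = (\<Sum>\<eta>\<in>\<Omega>. \<Sum>\<zeta>\<in>\<Omega>. P \<eta> * P \<zeta> * (\<Sum>\<omega>\<in>\<Omega>. if cls \<eta> \<zeta> \<omega> then P \<omega> / (pabc \<omega> * pc \<omega>) else 0))"
    unfolding sum_distrib_left by (intro sum.cong refl trans[OF sum.swap]) simp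
  also have "\<dots> \<le> (\<Sum>\<eta>\<in>\<Omega>. \<Sum>\<zeta>\<in>\<Omega>. P \<eta> * P \<zeta> * (if C \<zeta> = C \<eta> then 1 / pc \<eta> else 0))"
  proof (intro sum_mono mult_left_mono)
    fix \<eta> \<zeta> assume "\<eta> \<in> \<Omega>" "\<zeta> \<in> \<Omega>"
    then show "0 \<le> P \<eta> * P \<zeta>" using nonneg by simp
    show "(\<Sum>\<omega>\<in>\<Omega>. if cls \<eta> \<zeta> \<omega> then P \<omega> / (pabc \<omega> * pc \<omega>) else 0) \<le> (if C \<zeta> = C \<eta> then 1 / pc \<eta> else 0)"
      using sum_class_normalized_le[of A "A \<eta>" B "B \<zeta>" C "C \<eta>"] unfolding cls_def pabc_def pc_def
      by (cases "C \<zeta> = C \<eta>") simp_all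
  qed
  also have "\<dots> \<le> (\<Sum>\<eta>\<in>\<Omega>. P \<eta>)"
  proof (intro sum_mono)
    fix \<eta> assume "\<eta> \<in> \<Omega>"
    have "(\<Sum>\<zeta>\<in>\<Omega>. if C \<zeta> = C \<eta> then P \<zeta> / pc \<eta> else 0) \<le> 1"
      unfolding pc_def by (rule sum_normalized_le_1[OF finite nonneg])
    moreover have "(\<Sum>\<zeta>\<in>\<Omega>. P \<eta> * P \<zeta> * (if C \<zeta> = C \<eta> then 1 / pc \<eta> else 0))
        = P \<eta> * (\<Sum>\<zeta>\<in>\<Omega>. if C \<zeta> = C \<eta> then P \<zeta> / pc \<eta> else 0)"
      unfolding sum_distrib_left by (intro sum.cong refl) auto
    ultimately show "(\<Sum>\<zeta>\<in>\<Omega>. P \<eta> * P \<zeta> * (if C \<zeta> = C \<eta> then 1 / pc \<eta> else 0)) \<le> P \<eta>"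
      using nonneg \<open>\<eta> \<in> \<Omega>\<close> by (simp add: mult_left_le)
  qed
  finally show ?thesis .
qed

lemma indep_ratio_gap_nonneg:
  assumes "\<omega> \<in> \<Omega>"
  shows "0 \<le> P \<omega> * (indep_ratio \<Omega> P A B C \<omega> - 1 - ln (indep_ratio \<Omega> P A B C \<omega>))"
proof (cases "P \<omega> = 0")
  case False
  with assms nonneg have "0 < P \<omega>" by force
  with ln_le_minus_one[OF indep_ratio_pos[OF assms this, of A B C]] show ?thesis by simp
qed simp

lemma sum_indep_ratio_gap_nonneg:
  "0 \<le> (\<Sum>\<omega>\<in>\<Omega>. P \<omega> * (indep_ratio \<Omega> P A B C \<omega> - 1 - ln (indep_ratio \<Omega> P A B C \<omega>)))"
  by (intro sum_nonneg indep_ratio_gap_nonneg)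

lemma cond_mi_nonneg: "0 \<le> cond_mi \<Omega> P A B C"
  unfolding cond_mi_eq_gap_sum[of \<Omega> P A B C]
  using sum_indep_ratio_gap_nonneg[of A B C] sum_mult_indep_ratio_le[of A B C] by linarith

lemma cond_mi_eq_0_iff:
  "cond_mi \<Omega> P A B C = 0 \<longleftrightarrow> (\<forall>\<omega>\<in>\<Omega>. 0 < P \<omega> \<longrightarrow> cond_indep_at \<Omega> P A B C \<omega>)"
proof
  let ?r = "indep_ratio \<Omega> P A B C"
  assume "cond_mi \<Omega> P A B C = 0"
  then have "(\<Sum>\<omega>\<in>\<Omega>. P \<omega> * (?r \<omega> - 1 - ln (?r \<omega>))) = 0"
    unfolding cond_mi_eq_gap_sum[of \<Omega> P A B C]
    using sum_indep_ratio_gap_nonneg[of A B C] sum_mult_indep_ratio_le[of A B C] by linarith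
  then have gap_0: "P \<omega> * (?r \<omega> - 1 - ln (?r \<omega>)) = 0" if "\<omega> \<in> \<Omega>" for \<omega>
    using sum_nonneg_eq_0_iff[OF finite, of "\<lambda>\<omega>. P \<omega> * (?r \<omega> - 1 - ln (?r \<omega>))"] indep_ratio_gap_nonneg that
    by blast
  show "\<forall>\<omega>\<in>\<Omega>. 0 < P \<omega> \<longrightarrow> cond_indep_at \<Omega> P A B C \<omega>"
  proof (intro ballI impI)
    fix \<omega> assume \<omega>: "\<omega> \<in> \<Omega>" "0 < P \<omega>"
    then have "ln (?r \<omega>) = ?r \<omega> - 1" using gap_0[OF \<omega>(1)] by simp
    then have "?r \<omega> = 1" by (rule ln_eq_minus_one[OF indep_ratio_pos[OF \<omega>]])
    then show "cond_indep_at \<Omega> P A B C \<omega>" using indep_ratio_eq_1_iff[OF \<omega>, of A B C] by simp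
  qed
next
  assume "\<forall>\<omega>\<in>\<Omega>. 0 < P \<omega> \<longrightarrow> cond_indep_at \<Omega> P A B C \<omega>"
  then have "P \<omega> * ln (indep_ratio \<Omega> P A B C \<omega>) = 0" if "\<omega> \<in> \<Omega>" for \<omega>
    using indep_ratio_eq_1_iff[OF that, of A B C] nonneg that by (cases "P \<omega> = 0") force+
  then show "cond_mi \<Omega> P A B C = 0"
    unfolding cond_mi_eq_ln_indep_ratio by (simp add: sum.neutral)
qed

end

definition neg_entropy :: "'s set \<Rightarrow> ('s \<Rightarrow> real) \<Rightarrow> ('s \<Rightarrow> 'a) \<Rightarrow> real" where
  "neg_entropy \<Omega> P F = (\<Sum>\<omega>\<in>\<Omega>. P \<omega> * ln (prob_of \<Omega> P (\<lambda>\<eta>. F \<eta> = F \<omega>)))"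

lemma neg_entropy_cong:
  assumes "\<And>\<omega> \<eta>. \<omega> \<in> \<Omega> \<Longrightarrow> \<eta> \<in> \<Omega> \<Longrightarrow> F \<eta> = F \<omega> \<longleftrightarrow> F' \<eta> = F' \<omega>"
  shows "neg_entropy \<Omega> P F = neg_entropy \<Omega> P F'"
  unfolding neg_entropy_def using assms
  by (intro sum.cong refl arg_cong2[of _ _ _ _ "(*)"] arg_cong[of _ _ ln] prob_of_cong) auto

lemma cond_mi_eq_neg_entropy:
  assumes finite: "finite \<Omega>" and nonneg: "\<forall>\<omega>\<in>\<Omega>. 0 \<le> P \<omega>"
  shows "cond_mi \<Omega> P A B C = neg_entropy \<Omega> P (\<lambda>\<omega>. (A \<omega>, B \<omega>, C \<omega>)) + neg_entropy \<Omega> P C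
    - neg_entropy \<Omega> P (\<lambda>\<omega>. (A \<omega>, C \<omega>)) - neg_entropy \<Omega> P (\<lambda>\<omega>. (B \<omega>, C \<omega>))"
proof -
  have "P \<omega> * ln (prob_of \<Omega> P (\<lambda>\<eta>. A \<eta> = A \<omega> \<and> B \<eta> = B \<omega> \<and> C \<eta> = C \<omega>) * prob_of \<Omega> P (\<lambda>\<eta>. C \<eta> = C \<omega>)
        / (prob_of \<Omega> P (\<lambda>\<eta>. A \<eta> = A \<omega> \<and> C \<eta> = C \<omega>) * prob_of \<Omega> P (\<lambda>\<eta>. B \<eta> = B \<omega> \<and> C \<eta> = C \<omega>)))
      = P \<omega> * ln (prob_of \<Omega> P (\<lambda>\<eta>. A \<eta> = A \<omega> \<and> B \<eta> = B \<omega> \<and> C \<eta> = C \<omega>))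
        + P \<omega> * ln (prob_of \<Omega> P (\<lambda>\<eta>. C \<eta> = C \<omega>))
        - P \<omega> * ln (prob_of \<Omega> P (\<lambda>\<eta>. A \<eta> = A \<omega> \<and> C \<eta> = C \<omega>))
        - P \<omega> * ln (prob_of \<Omega> P (\<lambda>\<eta>. B \<eta> = B \<omega> \<and> C \<eta> = C \<omega>))"
    if "\<omega> \<in> \<Omega>" for \<omega>
  proof (cases "P \<omega> = 0")
    case False
    with nonneg \<open>\<omega> \<in> \<Omega>\<close> have "0 < P \<omega>" by force
    note pos = prob_of_pos_point[OF finite nonneg \<open>\<omega> \<in> \<Omega>\<close> _ this]
    show ?thesis
      using pos[of "\<lambda>\<eta>. A \<eta> = A \<omega> \<and> B \<eta> = B \<omega> \<and> C \<eta> = C \<omega>"] pos[of "\<lambda>\<eta>. C \<eta> = C \<omega>"]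
        pos[of "\<lambda>\<eta>. A \<eta> = A \<omega> \<and> C \<eta> = C \<omega>"] pos[of "\<lambda>\<eta>. B \<eta> = B \<omega> \<and> C \<eta> = C \<omega>"]
      by (simp add: ln_divide_pos ln_mult_pos algebra_simps)
  qed simp
  then show ?thesis
    unfolding cond_mi_def neg_entropy_def by (simp add: sum.distrib sum_subtractf)
qed

section \<open>The chain rule along a trajectory\<close>

lemma take_eq_iff_take_pred_and_nth:
  assumes "0 < t" "t \<le> length xs" "t \<le> length ys"
  shows "take t xs = take t ys \<longleftrightarrow> take (t - 1) xs = take (t - 1) ys \<and> xs ! (t - 1) = ys ! (t - 1)"
  using take_Suc_conv_app_nth[of "t - 1" xs] take_Suc_conv_app_nth[of "t - 1" ys] assms by auto

context
  fixes \<Omega> :: "('a \<times> 'b list) set" and P :: "'a \<times> 'b list \<Rightarrow> real" and n :: nat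
  assumes finite: "finite \<Omega>" and nonneg: "\<forall>\<omega>\<in>\<Omega>. 0 \<le> P \<omega>"
    and length_snd: "\<forall>\<omega>\<in>\<Omega>. length (snd \<omega>) = n"
begin

lemma cond_mi_step_split:
  fixes Z :: "'a \<Rightarrow> 'z"
  assumes t: "t \<in> {1..n}"
  shows "cond_mi \<Omega> P (\<lambda>\<omega>. Z (fst \<omega>)) (\<lambda>\<omega>. snd \<omega> ! (t - 1)) (\<lambda>\<omega>. take (t - 1) (snd \<omega>))
      + cond_mi \<Omega> P fst (\<lambda>\<omega>. snd \<omega> ! (t - 1)) (\<lambda>\<omega>. (Z (fst \<omega>), take (t - 1) (snd \<omega>)))
    = (neg_entropy \<Omega> P (\<lambda>\<omega>. (fst \<omega>, take t (snd \<omega>))) - neg_entropy \<Omega> P (\<lambda>\<omega>. (fst \<omega>, take (t - 1) (snd \<omega>))))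
      - (neg_entropy \<Omega> P (\<lambda>\<omega>. take t (snd \<omega>)) - neg_entropy \<Omega> P (\<lambda>\<omega>. take (t - 1) (snd \<omega>)))"
proof -
  have take_t: "take t (snd \<eta>) = take t (snd \<omega>)
      \<longleftrightarrow> take (t - 1) (snd \<eta>) = take (t - 1) (snd \<omega>) \<and> snd \<eta> ! (t - 1) = snd \<omega> ! (t - 1)"
    if "\<omega> \<in> \<Omega>" "\<eta> \<in> \<Omega>" for \<omega> \<eta>
    using take_eq_iff_take_pred_and_nth[of t "snd \<eta>" "snd \<omega>"] length_snd t that by auto
  have "neg_entropy \<Omega> P (\<lambda>\<omega>. (Z (fst \<omega>), snd \<omega> ! (t - 1), take (t - 1) (snd \<omega>)))
      = neg_entropy \<Omega> P (\<lambda>\<omega>. (Z (fst \<omega>), take t (snd \<omega>)))"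
    "neg_entropy \<Omega> P (\<lambda>\<omega>. (snd \<omega> ! (t - 1), take (t - 1) (snd \<omega>)))
      = neg_entropy \<Omega> P (\<lambda>\<omega>. take t (snd \<omega>))"
    by (intro neg_entropy_cong; simp add: take_t; blast)+
  moreover have "neg_entropy \<Omega> P (\<lambda>\<omega>. (fst \<omega>, snd \<omega> ! (t - 1), Z (fst \<omega>), take (t - 1) (snd \<omega>)))
      = neg_entropy \<Omega> P (\<lambda>\<omega>. (fst \<omega>, take t (snd \<omega>)))"
    "neg_entropy \<Omega> P (\<lambda>\<omega>. (fst \<omega>, Z (fst \<omega>), take (t - 1) (snd \<omega>)))
      = neg_entropy \<Omega> P (\<lambda>\<omega>. (fst \<omega>, take (t - 1) (snd \<omega>)))"
    "neg_entropy \<Omega> P (\<lambda>\<omega>. (snd \<omega> ! (t - 1), Z (fst \<omega>), take (t - 1) (snd \<omega>)))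
      = neg_entropy \<Omega> P (\<lambda>\<omega>. (Z (fst \<omega>), take t (snd \<omega>)))"
    by (intro neg_entropy_cong; simp add: take_t; auto)+
  ultimately show ?thesis
    unfolding cond_mi_eq_neg_entropy[OF finite nonneg] by simp
qed

lemma mutual_info_chain_rule:
  fixes Z :: "nat \<Rightarrow> 'a \<Rightarrow> 'z"
  shows "mutual_info \<Omega> P fst snd
    = (\<Sum>t=1..n. cond_mi \<Omega> P (\<lambda>\<omega>. Z t (fst \<omega>)) (\<lambda>\<omega>. snd \<omega> ! (t - 1)) (\<lambda>\<omega>. take (t - 1) (snd \<omega>)))
    + (\<Sum>t=1..n. cond_mi \<Omega> P fst (\<lambda>\<omega>. snd \<omega> ! (t - 1)) (\<lambda>\<omega>. (Z t (fst \<omega>), take (t - 1) (snd \<omega>))))"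
proof -
  define GXY where "GXY k = neg_entropy \<Omega> P (\<lambda>\<omega>. (fst \<omega>, take k (snd \<omega>)))" for k
  define GY where "GY k = neg_entropy \<Omega> P (\<lambda>\<omega>. take k (snd \<omega>))" for k
  have "neg_entropy \<Omega> P (\<lambda>\<omega>. (fst \<omega>, snd \<omega>, ())) = GXY n"
    "neg_entropy \<Omega> P (\<lambda>\<omega>. ()) = GY 0"
    "neg_entropy \<Omega> P (\<lambda>\<omega>. (fst \<omega>, ())) = GXY 0"
    "neg_entropy \<Omega> P (\<lambda>\<omega>. (snd \<omega>, ())) = GY n"
    unfolding GXY_def GY_def using length_snd by (intro neg_entropy_cong; simp add: prod_eq_iff)+
  then have total: "mutual_info \<Omega> P fst snd = (GXY n - GXY 0) - (GY n - GY 0)"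
    unfolding mutual_info_def cond_mi_eq_neg_entropy[OF finite nonneg] by simp
  have "(\<Sum>t=1..n. cond_mi \<Omega> P (\<lambda>\<omega>. Z t (fst \<omega>)) (\<lambda>\<omega>. snd \<omega> ! (t - 1)) (\<lambda>\<omega>. take (t - 1) (snd \<omega>)))
      + (\<Sum>t=1..n. cond_mi \<Omega> P fst (\<lambda>\<omega>. snd \<omega> ! (t - 1)) (\<lambda>\<omega>. (Z t (fst \<omega>), take (t - 1) (snd \<omega>))))
      = (\<Sum>t=1..n. (GXY t - GXY (t - 1)) - (GY t - GY (t - 1)))"
    unfolding sum.distrib[symmetric] GXY_def GY_def by (intro sum.cong refl cond_mi_step_split)
  also have "\<dots> = (\<Sum>t=1..n. GXY t - GXY (t - 1)) - (\<Sum>t=1..n. GY t - GY (t - 1))"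
    by (rule sum_subtractf)
  also have "\<dots> = mutual_info \<Omega> P fst snd"
    unfolding total using sum_telescope''[of 0 n GXY] sum_telescope''[of 0 n GY] by simp
  finally show ?thesis ..
qed

end

section \<open>The joint law of a release policy\<close>

lemma prob_vec_eq_if_agree_on_support:
  fixes f g :: "'v::finite \<Rightarrow> real"
  assumes f: "prob_vec f" and g: "prob_vec g" and agree: "\<And>v. 0 < f v \<Longrightarrow> g v = f v"
  shows "f = g"
proof -
  have ge: "0 \<le> g v - f v" for v
  proof (cases "0 < f v")
    case False
    with f have "f v = 0" unfolding prob_vec_def by (simp add: antisym not_less)
    with g show ?thesis unfolding prob_vec_def by simp
  qed (simp add: agree)
  have "(\<Sum>v\<in>UNIV. g v - f v) = 0"
    using f g unfolding prob_vec_def by (simp add: sum_subtractf)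
  then have "g v - f v = 0" for v
    using sum_nonneg_eq_0_iff[of UNIV "\<lambda>v. g v - f v"] ge by simp
  then show ?thesis by auto
qed

lemma prod_cong_while_nonzero:
  fixes f g :: "nat \<Rightarrow> 'a::comm_semiring_1"
  assumes "\<And>t. 1 \<le> t \<Longrightarrow> t \<le> k \<Longrightarrow> (\<Prod>s=1..t - 1. f s) \<noteq> 0 \<Longrightarrow> f t = g t"
  shows "(\<Prod>t=1..k. f t) = (\<Prod>t=1..k. g t)"
  using assms
proof (induction k)
  case (Suc k)
  then have IH: "(\<Prod>t=1..k. f t) = (\<Prod>t=1..k. g t)" by simp
  show ?case
  proof (cases "(\<Prod>t=1..k. f t) = 0")
    case False
    then have "f (Suc k) = g (Suc k)" using Suc.prems[of "Suc k"] by simp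
    then show ?thesis using IH by simp
  qed (use IH in simp)
qed simp

definition path_prob :: "('w \<Rightarrow> real) \<Rightarrow> ('w \<Rightarrow> 'w \<Rightarrow> real) \<Rightarrow> nat \<Rightarrow> 'w list \<Rightarrow> real" where
  "path_prob p T n xs = (\<Prod>t\<in>{1..n}. if t = 1 then p (xs ! 0) else T (xs ! (t - 2)) (xs ! (t - 1)))"

definition release_prob :: "(nat \<Rightarrow> 'w list \<Rightarrow> 'w list \<Rightarrow> 'w \<Rightarrow> real) \<Rightarrow> nat \<Rightarrow> 'w list \<Rightarrow> 'w list \<Rightarrow> real" where
  "release_prob q k xs ys = (\<Prod>t\<in>{1..k}. q t (take t xs) (take (t - 1) ys) (ys ! (t - 1)))"

lemma joint_eq:
  "joint p T q n (xs, ys)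
    = (if length xs = n \<and> length ys = n then path_prob p T n xs * release_prob q n xs ys else 0)"
  by (simp add: joint_def path_prob_def release_prob_def prod.distrib)

lemma path_prob_nonneg: "prob_vec p \<Longrightarrow> markov_kernel T \<Longrightarrow> 0 \<le> path_prob p T n xs"
  unfolding path_prob_def markov_kernel_def prob_vec_def by (auto intro: prod_nonneg)

lemma QH_prob_vec:
  "q \<in> QH \<Longrightarrow> 1 \<le> t \<Longrightarrow> t \<le> length xs \<Longrightarrow> t - 1 \<le> length ys
    \<Longrightarrow> prob_vec (q t (take t xs) (take (t - 1) ys))"
  unfolding QH_def by auto

lemma release_prob_nonneg:
  assumes "q \<in> QH" "k \<le> length xs" "k \<le> length ys"
  shows "0 \<le> release_prob q k xs ys"
  unfolding release_prob_def
proof (intro prod_nonneg)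
  fix t assume "t \<in> {1..k}"
  with assms have "prob_vec (q t (take t xs) (take (t - 1) ys))"
    by (intro QH_prob_vec) auto
  then show "0 \<le> q t (take t xs) (take (t - 1) ys) (ys ! (t - 1))"
    unfolding prob_vec_def by simp
qed

lemma joint_nonneg: "prob_vec p \<Longrightarrow> markov_kernel T \<Longrightarrow> q \<in> QH \<Longrightarrow> 0 \<le> joint p T q n \<omega>"
  by (cases \<omega>) (simp add: joint_eq path_prob_nonneg release_prob_nonneg)

lemma finite_traj_space: "finite (traj_space n :: ('w::finite list \<times> 'w list) set)"
proof -
  have "traj_space n = {xs::'w list. length xs = n} \<times> {ys::'w list. length ys = n}"
    unfolding traj_space_def by auto
  then show ?thesis using finite_lists_length_eq[of "UNIV :: 'w set" n] by simp
qed

lemma release_prob_snoc: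
  "length ys = k \<Longrightarrow> release_prob q (Suc k) xs (ys @ [y]) = release_prob q k xs ys * q (Suc k) (take (Suc k) xs) ys y"
  unfolding release_prob_def by (auto simp: nth_append intro!: prod.cong)

lemma release_prob_take: "release_prob q k xs (take k ys) = release_prob q k xs ys"
  unfolding release_prob_def by (intro prod.cong) auto

lemma release_prob_marginal:
  fixes q :: "nat \<Rightarrow> 'w::finite list \<Rightarrow> 'w list \<Rightarrow> 'w \<Rightarrow> real"
  assumes q: "q \<in> QH" and xs: "length xs = n"
  shows "length w \<le> n \<Longrightarrow>
    (\<Sum>ys\<in>{ys. length ys = n \<and> take (length w) ys = w}. release_prob q n xs ys) = release_prob q (length w) xs w"
proof (induction "n - length w" arbitrary: w)
  case 0
  then have "{ys. length ys = n \<and> take (length w) ys = w} = {w}" by auto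
  with 0 show ?case by simp
next
  case (Suc m)
  let ?S = "{ys. length ys = n \<and> take (length w) ys = w}"
  have w: "length w < n" using Suc by simp
  have "finite ?S"
    using finite_lists_length_eq[of "UNIV :: 'w set" n] by (auto intro: finite_subset)
  moreover have "{ys. ys \<in> ?S \<and> ys ! length w = v} = {ys. length ys = n \<and> take (length (w @ [v])) ys = w @ [v]}" for v
    using w by (auto simp: take_Suc_conv_app_nth)
  ultimately have "(\<Sum>ys\<in>?S. release_prob q n xs ys) = (\<Sum>v\<in>UNIV. release_prob q (Suc (length w)) xs (w @ [v]))"
    using Suc.hyps(1)[of "w @ [v]" for v] Suc.hyps(2) w
    by (simp flip: sum.group[of ?S UNIV "\<lambda>ys. ys ! length w"])
  also have "\<dots> = release_prob q (length w) xs w * (\<Sum>v\<in>UNIV. q (Suc (length w)) (take (Suc (length w)) xs) w v)"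
    by (simp add: release_prob_snoc sum_distrib_left)
  also have "\<dots> = release_prob q (length w) xs w"
    using QH_prob_vec[OF q, of "Suc (length w)" xs w] xs w by (simp add: prob_vec_def)
  finally show ?case .
qed

lemma prob_of_joint_prefix:
  fixes q :: "nat \<Rightarrow> 'w::finite list \<Rightarrow> 'w list \<Rightarrow> 'w \<Rightarrow> real"
  assumes q: "q \<in> QH" and w: "length w \<le> n"
  shows "prob_of (traj_space n) (joint p T q n) (\<lambda>\<eta>. Q (fst \<eta>) \<and> take (length w) (snd \<eta>) = w)
    = (\<Sum>x\<in>{x. length x = n \<and> Q x}. path_prob p T n x * release_prob q (length w) x w)"
proof -
  let ?X = "{x::'w list. length x = n \<and> Q x}" and ?Y = "{ys::'w list. length ys = n \<and> take (length w) ys = w}"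
  have "{\<eta>\<in>traj_space n. Q (fst \<eta>) \<and> take (length w) (snd \<eta>) = w} = ?X \<times> ?Y"
    unfolding traj_space_def by auto
  moreover have "finite ?X" "finite ?Y"
    using finite_lists_length_eq[of "UNIV :: 'w set" n] by (auto intro: finite_subset)
  ultimately have "prob_of (traj_space n) (joint p T q n) (\<lambda>\<eta>. Q (fst \<eta>) \<and> take (length w) (snd \<eta>) = w)
      = (\<Sum>x\<in>?X. \<Sum>ys\<in>?Y. joint p T q n (x, ys))"
    unfolding prob_of_def by (simp add: sum.cartesian_product)
  also have "\<dots> = (\<Sum>x\<in>?X. path_prob p T n x * (\<Sum>ys\<in>?Y. release_prob q n x ys))"
    unfolding sum_distrib_left by (intro sum.cong refl) (simp add: joint_eq)
  also have "\<dots> = (\<Sum>x\<in>?X. path_prob p T n x * release_prob q (length w) x w)"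
    using release_prob_marginal[OF q _ w] by simp
  finally show ?thesis .
qed

corollary prob_of_joint_fst_prefix:
  fixes q :: "nat \<Rightarrow> 'w::finite list \<Rightarrow> 'w list \<Rightarrow> 'w \<Rightarrow> real"
  assumes q: "q \<in> QH" and x: "length x = n" and w: "length w \<le> n"
  shows "prob_of (traj_space n) (joint p T q n) (\<lambda>\<eta>. fst \<eta> = x \<and> take (length w) (snd \<eta>) = w)
    = path_prob p T n x * release_prob q (length w) x w"
proof -
  have "{x'. length x' = n \<and> x' = x} = {x}" using x by auto
  then show ?thesis using prob_of_joint_prefix[OF q w, where Q="\<lambda>x'. x' = x"] by simp
qed

section \<open>Conditional independence of the release from the past states\<close>

text \<open>\<open>window_prob n P t z w\<close> is the probability that the state window \<open>(x\<^sub>t\<^sub>-\<^sub>1, x\<^sub>t)\<close>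
  (just \<open>[x\<^sub>1]\<close> for \<open>t = 1\<close>) equals \<open>z\<close> and the released prefix is \<open>w\<close>.\<close>

definition window_prob :: "nat \<Rightarrow> ('w list \<times> 'w list \<Rightarrow> real) \<Rightarrow> nat \<Rightarrow> 'w list \<Rightarrow> 'w list \<Rightarrow> real" where
  "window_prob n P t z w
    = prob_of (traj_space n) P (\<lambda>\<eta>. drop (t - 2) (take t (fst \<eta>)) = z \<and> take (length w) (snd \<eta>) = w)"

definition residual_indep :: "nat \<Rightarrow> ('w list \<times> 'w list \<Rightarrow> real) \<Rightarrow> nat \<Rightarrow> 'w list \<times> 'w list \<Rightarrow> bool" where
  "residual_indep n P t = cond_indep_at (traj_space n) P fst (\<lambda>\<omega>. snd \<omega> ! (t - 1))
    (\<lambda>\<omega>. (drop (t - 2) (take t (fst \<omega>)), take (t - 1) (snd \<omega>)))"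

lemma window_prob_joint:
  fixes q :: "nat \<Rightarrow> 'w::finite list \<Rightarrow> 'w list \<Rightarrow> 'w \<Rightarrow> real"
  assumes "q \<in> QH" "length w \<le> n"
  shows "window_prob n (joint p T q n) t z w
    = (\<Sum>x\<in>{x. length x = n \<and> drop (t - 2) (take t x) = z}. path_prob p T n x * release_prob q (length w) x w)"
  unfolding window_prob_def using prob_of_joint_prefix[OF assms] .

lemma residual_indep_joint_iff:
  fixes q :: "nat \<Rightarrow> 'w::finite list \<Rightarrow> 'w list \<Rightarrow> 'w \<Rightarrow> real"
  assumes q: "q \<in> QH" and t: "1 \<le> t" "t \<le> n" and \<omega>: "\<omega> \<in> traj_space n"
  shows "residual_indep n (joint p T q n) t \<omega> \<longleftrightarrow>
    path_prob p T n (fst \<omega>) * release_prob q (t - 1) (fst \<omega>) (take (t - 1) (snd \<omega>))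
      * (q t (take t (fst \<omega>)) (take (t - 1) (snd \<omega>)) (snd \<omega> ! (t - 1))
         * window_prob n (joint p T q n) t (drop (t - 2) (take t (fst \<omega>))) (take (t - 1) (snd \<omega>)))
    = path_prob p T n (fst \<omega>) * release_prob q (t - 1) (fst \<omega>) (take (t - 1) (snd \<omega>))
      * window_prob n (joint p T q n) t (drop (t - 2) (take t (fst \<omega>))) (take t (snd \<omega>))"
proof -
  let ?P = "joint p T q n" and ?x = "fst \<omega>" and ?y = "snd \<omega>"
  let ?C = "\<lambda>\<eta>. (drop (t - 2) (take t (fst \<eta>)), take (t - 1) (snd \<eta>))"
  have len: "length ?x = n" "length ?y = n"
    using \<omega> by (auto simp: traj_space_def)
  have t_pred: "t - 1 \<le> n"
    using t by simp
  have take_t: "take t (snd \<eta>) = take t ?y \<longleftrightarrow>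
      take (t - 1) (snd \<eta>) = take (t - 1) ?y \<and> snd \<eta> ! (t - 1) = ?y ! (t - 1)" if "\<eta> \<in> traj_space n" for \<eta>
    using take_eq_iff_take_pred_and_nth[of t "snd \<eta>" ?y] that t len by (auto simp: traj_space_def)
  have fst_prefix: "prob_of (traj_space n) ?P (\<lambda>\<eta>. fst \<eta> = ?x \<and> take k (snd \<eta>) = take k ?y)
      = path_prob p T n ?x * release_prob q k ?x (take k ?y)" if "k \<le> n" for k
  proof -
    have "length (take k ?y) = k" using that len by simp
    then show ?thesis using prob_of_joint_fst_prefix[OF q len(1), where w="take k ?y"] that by simp
  qed
  have "prob_of (traj_space n) ?P (\<lambda>\<eta>. fst \<eta> = ?x \<and> snd \<eta> ! (t - 1) = ?y ! (t - 1) \<and> ?C \<eta> = ?C \<omega>)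
      = path_prob p T n ?x * release_prob q t ?x (take t ?y)"
    unfolding fst_prefix[OF t(2), symmetric] by (intro prob_of_cong) (auto simp: take_t)
  moreover have "prob_of (traj_space n) ?P (\<lambda>\<eta>. fst \<eta> = ?x \<and> ?C \<eta> = ?C \<omega>)
      = path_prob p T n ?x * release_prob q (t - 1) ?x (take (t - 1) ?y)"
    using t unfolding fst_prefix[OF t_pred, symmetric] by (intro prob_of_cong) auto
  moreover have "prob_of (traj_space n) ?P (\<lambda>\<eta>. ?C \<eta> = ?C \<omega>)
      = window_prob n ?P t (drop (t - 2) (take t ?x)) (take (t - 1) ?y)"
    unfolding window_prob_def using t len by (intro prob_of_cong) auto
  moreover have "prob_of (traj_space n) ?P (\<lambda>\<eta>. snd \<eta> ! (t - 1) = ?y ! (t - 1) \<and> ?C \<eta> = ?C \<omega>)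
      = window_prob n ?P t (drop (t - 2) (take t ?x)) (take t ?y)"
    unfolding window_prob_def using t len by (intro prob_of_cong) (auto simp: take_t)
  moreover have "release_prob q t ?x (take t ?y)
      = release_prob q (t - 1) ?x (take (t - 1) ?y) * q t (take t ?x) (take (t - 1) ?y) (?y ! (t - 1))"
    using release_prob_snoc[of "take (t - 1) ?y" "t - 1" q ?x "?y ! (t - 1)"] take_Suc_conv_app_nth[of "t - 1" ?y] t len
    by simp
  ultimately show ?thesis
    unfolding residual_indep_def cond_indep_at_def by (simp add: ac_simps)
qed

lemma residual_indep_if_QS:
  fixes q :: "nat \<Rightarrow> 'w::finite list \<Rightarrow> 'w list \<Rightarrow> 'w \<Rightarrow> real"
  assumes q: "q \<in> QS" and t: "1 \<le> t" "t \<le> n" and \<omega>: "\<omega> \<in> traj_space n"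
  shows "residual_indep n (joint p T q n) t \<omega>"
proof -
  have qH: "q \<in> QH" using q unfolding QS_def by simp
  define x where "x = fst \<omega>"
  define w where "w = take (t - 1) (snd \<omega>)"
  define v where "v = snd \<omega> ! (t - 1)"
  define X where "X = {x'. length x' = n \<and> drop (t - 2) (take t x') = drop (t - 2) (take t x)}"
  have len: "length x = n" "length (snd \<omega>) = n" "length w = t - 1"
    using \<omega> t by (auto simp: traj_space_def x_def w_def)
  have take_t: "take t (snd \<omega>) = w @ [v]"
    using take_Suc_conv_app_nth[of "t - 1" "snd \<omega>"] t len by (simp add: w_def v_def)
  have policy: "q t (take t x') w = q t (take t x) w" if "x' \<in> X" for x'
    using q that t len unfolding QS_def X_def by auto
  have snoc: "release_prob q t x' (w @ [v]) = release_prob q (t - 1) x' w * q t (take t x') w v" for x'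
    using release_prob_snoc[of w "t - 1" q x' v] t len by simp
  have "window_prob n (joint p T q n) t (drop (t - 2) (take t x)) (w @ [v])
      = (\<Sum>x'\<in>X. path_prob p T n x' * (release_prob q (t - 1) x' w * q t (take t x') w v))"
    using window_prob_joint[OF qH, of "w @ [v]"] t len by (simp add: X_def snoc)
  also have "\<dots> = (\<Sum>x'\<in>X. q t (take t x) w v * (path_prob p T n x' * release_prob q (t - 1) x' w))"
    by (intro sum.cong refl) (simp add: policy ac_simps)
  also have "\<dots> = q t (take t x) w v * window_prob n (joint p T q n) t (drop (t - 2) (take t x)) w"
    unfolding sum_distrib_left[symmetric] using window_prob_joint[OF qH, of w] t len by (simp add: X_def)
  finally show ?thesis
    unfolding residual_indep_joint_iff[OF qH t \<omega>] x_def[symmetric] w_def[symmetric] v_def[symmetric] take_t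
    by simp
qed

lemma sum_window_prob_snoc:
  fixes P :: "'w::finite list \<times> 'w list \<Rightarrow> real"
  assumes "1 \<le> t" "t \<le> n" "length ys = t - 1"
  shows "(\<Sum>v\<in>UNIV. window_prob n P t z (ys @ [v])) = window_prob n P t z ys"
proof -
  have "window_prob n P t z (ys @ [v]) = prob_of (traj_space n) P
      (\<lambda>\<eta>. (drop (t - 2) (take t (fst \<eta>)) = z \<and> take (length ys) (snd \<eta>) = ys) \<and> snd \<eta> ! (t - 1) = v)" for v
    unfolding window_prob_def
    using assms take_eq_iff_take_pred_and_nth[of t _ "ys @ [v]"]
    by (intro prob_of_cong) (auto simp: traj_space_def nth_append)
  then show ?thesis
    unfolding window_prob_def by (simp only: prob_of_sum_values[OF finite_traj_space])
qed

text \<open>The conditional law of \<open>Y\<^sub>t\<close> given the state window and the released prefix; the uniform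
  fallback on null conditioning events is arbitrary.\<close>

definition window_policy :: "nat \<Rightarrow> ('w::finite list \<times> 'w list \<Rightarrow> real) \<Rightarrow> nat \<Rightarrow> 'w list \<Rightarrow> 'w list \<Rightarrow> 'w \<Rightarrow> real"
  where "window_policy n P t xs ys v =
    (if t \<le> n \<and> window_prob n P t (drop (t - 2) xs) ys \<noteq> 0
     then window_prob n P t (drop (t - 2) xs) (ys @ [v]) / window_prob n P t (drop (t - 2) xs) ys
     else 1 / real (card (UNIV :: 'w set)))"

lemma window_policy_QS:
  fixes P :: "'w::finite list \<times> 'w list \<Rightarrow> real"
  assumes "\<forall>\<omega>\<in>traj_space n. 0 \<le> P \<omega>"
  shows "window_policy n P \<in> QS"
proof -
  have "prob_vec (window_policy n P t xs ys)" if "1 \<le> t" "length ys = t - 1" for t xs ys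
  proof (cases "t \<le> n \<and> window_prob n P t (drop (t - 2) xs) ys \<noteq> 0")
    case True
    then show ?thesis
      using sum_window_prob_snoc[OF that(1) _ that(2)] prob_of_nonneg[OF assms]
      by (simp add: prob_vec_def window_policy_def window_prob_def flip: sum_divide_distrib)
  next
    case False
    then have "window_policy n P t xs ys = (\<lambda>_. 1 / real (card (UNIV :: 'w set)))"
      by (auto simp: window_policy_def fun_eq_iff)
    then show ?thesis by (simp add: prob_vec_def)
  qed
  then show ?thesis
    unfolding QS_def QH_def by (auto simp: window_policy_def)
qed

text \<open>A release value of positive probability occurs on a trajectory of positive probability, where
  the independence condition pins it down.\<close>

lemma window_policy_agrees:
  fixes q :: "nat \<Rightarrow> 'w::finite list \<Rightarrow> 'w list \<Rightarrow> 'w \<Rightarrow> real"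
  assumes p: "prob_vec p" and T: "markov_kernel T" and q: "q \<in> QH"
    and indep: "\<And>\<omega>. \<omega> \<in> traj_space n \<Longrightarrow> 0 < joint p T q n \<omega> \<Longrightarrow> residual_indep n (joint p T q n) t \<omega>"
    and t: "1 \<le> t" "t \<le> n" and x: "length x = n" and w: "length w = t - 1"
    and pos: "0 < path_prob p T n x * release_prob q (t - 1) x w"
  shows "q t (take t x) w = window_policy n (joint p T q n) t (take t x) w"
proof (rule prob_vec_eq_if_agree_on_support)
  let ?P = "joint p T q n" and ?z = "drop (t - 2) (take t x)"
  have nonneg: "\<forall>\<omega>\<in>traj_space n. 0 \<le> ?P \<omega>"
    using joint_nonneg[OF p T q] by simp
  show "prob_vec (q t (take t x) w)"
    using QH_prob_vec[OF q, of t x w] t x w by simp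
  show "prob_vec (window_policy n ?P t (take t x) w)"
    using window_policy_QS[OF nonneg] t x w unfolding QS_def QH_def by auto
  fix v assume qv: "0 < q t (take t x) w v"
  have "prob_of (traj_space n) ?P (\<lambda>\<eta>. fst \<eta> = x \<and> take (length (w @ [v])) (snd \<eta>) = w @ [v])
      = path_prob p T n x * release_prob q (t - 1) x w * q t (take t x) w v"
    using prob_of_joint_fst_prefix[OF q x, of "w @ [v]"] release_prob_snoc[of w "t - 1" q x v] t w
    by simp
  also have "\<dots> > 0" using pos qv by simp
  finally obtain \<omega> where \<omega>: "\<omega> \<in> traj_space n" "fst \<omega> = x" "take t (snd \<omega>) = w @ [v]" "0 < ?P \<omega>"
    using w t by (auto dest: prob_of_pos_imp_ex)
  have y: "take (t - 1) (snd \<omega>) = w" "snd \<omega> ! (t - 1) = v"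
    using arg_cong[OF \<omega>(3), of "take (t - 1)"] arg_cong[OF \<omega>(3), of "\<lambda>ys. ys ! (t - 1)"] t w
    by (auto simp: nth_append)
  have den: "0 < window_prob n ?P t ?z w"
    unfolding window_prob_def using \<omega> y w
    by (intro prob_of_pos_point[OF finite_traj_space nonneg \<omega>(1)]) auto
  have "q t (take t x) w v * window_prob n ?P t ?z w = window_prob n ?P t ?z (w @ [v])"
    using indep[OF \<omega>(1,4)] pos
    unfolding residual_indep_joint_iff[OF q t \<omega>(1)] \<omega>(2,3) y by auto
  then show "window_policy n ?P t (take t x) w v = q t (take t x) w v"
    unfolding window_policy_def using den t by (simp add: field_simps)
qed

lemma joint_eq_window_policy_joint:
  fixes q :: "nat \<Rightarrow> 'w::finite list \<Rightarrow> 'w list \<Rightarrow> 'w \<Rightarrow> real"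
  assumes p: "prob_vec p" and T: "markov_kernel T" and q: "q \<in> QH"
    and indep: "\<And>t \<omega>. 1 \<le> t \<Longrightarrow> t \<le> n \<Longrightarrow> \<omega> \<in> traj_space n \<Longrightarrow> 0 < joint p T q n \<omega>
      \<Longrightarrow> residual_indep n (joint p T q n) t \<omega>"
  shows "joint p T q n = joint p T (window_policy n (joint p T q n)) n"
proof (intro ext, clarify)
  fix x y :: "'w list"
  let ?q' = "window_policy n (joint p T q n)"
  show "joint p T q n (x, y) = joint p T ?q' n (x, y)"
  proof (cases "length x = n \<and> length y = n \<and> path_prob p T n x \<noteq> 0")
    case True
    have "release_prob q n x y = release_prob ?q' n x y"
      unfolding release_prob_def
    proof (rule prod_cong_while_nonzero)
      fix t assume t: "1 \<le> t" "t \<le> n"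
        and "(\<Prod>s=1..t - 1. q s (take s x) (take (s - 1) y) (y ! (s - 1))) \<noteq> 0"
      then have "release_prob q (t - 1) x (take (t - 1) y) \<noteq> 0"
        unfolding release_prob_take by (simp add: release_prob_def)
      moreover have "0 \<le> release_prob q (t - 1) x (take (t - 1) y)"
        using True t by (intro release_prob_nonneg[OF q]) auto
      ultimately have "0 < path_prob p T n x * release_prob q (t - 1) x (take (t - 1) y)"
        using True path_prob_nonneg[OF p T, of n x] by simp
      with True t show "q t (take t x) (take (t - 1) y) (y ! (t - 1)) = ?q' t (take t x) (take (t - 1) y) (y ! (t - 1))"
        using window_policy_agrees[OF p T q indep[OF t] t, of x "take (t - 1) y"] by simp
    qed
    then show ?thesis by (simp add: joint_eq)
  qed (auto simp: joint_eq)
qed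

lemma residual_indep_iff_QS_law:
  fixes q :: "nat \<Rightarrow> 'w::finite list \<Rightarrow> 'w list \<Rightarrow> 'w \<Rightarrow> real"
  assumes p: "prob_vec p" and T: "markov_kernel T" and q: "q \<in> QH"
  shows "(\<forall>t\<in>{1..n}. \<forall>\<omega>\<in>traj_space n. 0 < joint p T q n \<omega> \<longrightarrow> residual_indep n (joint p T q n) t \<omega>)
    \<longleftrightarrow> (\<exists>q'\<in>QS. \<forall>\<omega>. joint p T q n \<omega> = joint p T q' n \<omega>)"
proof
  assume "\<forall>t\<in>{1..n}. \<forall>\<omega>\<in>traj_space n. 0 < joint p T q n \<omega> \<longrightarrow> residual_indep n (joint p T q n) t \<omega>"
  then have "joint p T q n = joint p T (window_policy n (joint p T q n)) n"
    by (intro joint_eq_window_policy_joint[OF p T q]) auto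
  moreover have "window_policy n (joint p T q n) \<in> QS"
    using joint_nonneg[OF p T q] by (intro window_policy_QS) simp
  ultimately show "\<exists>q'\<in>QS. \<forall>\<omega>. joint p T q n \<omega> = joint p T q' n \<omega>"
    by metis
next
  assume "\<exists>q'\<in>QS. \<forall>\<omega>. joint p T q n \<omega> = joint p T q' n \<omega>"
  then obtain q' where "q' \<in> QS" and "joint p T q n = joint p T q' n"
    by blast
  then show "\<forall>t\<in>{1..n}. \<forall>\<omega>\<in>traj_space n. 0 < joint p T q n \<omega> \<longrightarrow> residual_indep n (joint p T q n) t \<omega>"
    using residual_indep_if_QS by auto
qed

theorem lemma1:
  fixes p :: "'w::finite \<Rightarrow> real" and T :: "'w \<Rightarrow> 'w \<Rightarrow> real"
    and q :: "nat \<Rightarrow> 'w list \<Rightarrow> 'w list \<Rightarrow> 'w \<Rightarrow> real" and n :: nat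
  assumes "prob_vec p" and "markov_kernel T" and "q \<in> QH" and "1 \<le> n"
  shows "mutual_info (traj_space n) (joint p T q n) fst snd
           \<ge> (\<Sum>t=1..n. cond_mi (traj_space n) (joint p T q n)
                 (\<lambda>\<omega>. drop (t - 2) (take t (fst \<omega>)))
                 (\<lambda>\<omega>. snd \<omega> ! (t - 1))
                 (\<lambda>\<omega>. take (t - 1) (snd \<omega>)))
       \<and> (mutual_info (traj_space n) (joint p T q n) fst snd
           = (\<Sum>t=1..n. cond_mi (traj_space n) (joint p T q n)
                 (\<lambda>\<omega>. drop (t - 2) (take t (fst \<omega>)))
                 (\<lambda>\<omega>. snd \<omega> ! (t - 1))
                 (\<lambda>\<omega>. take (t - 1) (snd \<omega>)))
          \<longleftrightarrow> (\<exists>q'\<in>QS. \<forall>\<omega>. joint p T q n \<omega> = joint p T q' n \<omega>))"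
proof -
  let ?P = "joint p T q n"
  let ?D = "\<lambda>t. cond_mi (traj_space n) ?P fst (\<lambda>\<omega>. snd \<omega> ! (t - 1))
    (\<lambda>\<omega>. (drop (t - 2) (take t (fst \<omega>)), take (t - 1) (snd \<omega>)))"
  have nonneg: "\<forall>\<omega>\<in>traj_space n. 0 \<le> ?P \<omega>"
    using joint_nonneg[OF assms(1-3)] by simp
  note finite = finite_traj_space[where 'w='w]
  have chain: "mutual_info (traj_space n) ?P fst snd
      = (\<Sum>t=1..n. cond_mi (traj_space n) ?P (\<lambda>\<omega>. drop (t - 2) (take t (fst \<omega>)))
          (\<lambda>\<omega>. snd \<omega> ! (t - 1)) (\<lambda>\<omega>. take (t - 1) (snd \<omega>)))
        + (\<Sum>t=1..n. ?D t)"
    by (rule mutual_info_chain_rule[OF finite nonneg]) (simp add: traj_space_def)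
  have "0 \<le> (\<Sum>t=1..n. ?D t)"
    by (intro sum_nonneg cond_mi_nonneg[OF finite nonneg])
  moreover have "(\<Sum>t=1..n. ?D t) = 0 \<longleftrightarrow> (\<forall>t\<in>{1..n}. ?D t = 0)"
    by (intro sum_nonneg_eq_0_iff cond_mi_nonneg[OF finite nonneg]) simp
  moreover have "\<dots> \<longleftrightarrow> (\<exists>q'\<in>QS. \<forall>\<omega>. ?P \<omega> = joint p T q' n \<omega>)"
    unfolding cond_mi_eq_0_iff[OF finite nonneg] residual_indep_iff_QS_law[OF assms(1-3), symmetric]
    by (simp add: residual_indep_def)
  ultimately show ?thesis
    using chain by linarith
qed

end
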